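(* Let $N\ge 2$ be an integer. For $k\in\mathbb{Z}$ and arguments $(u,v)$ let $C_k(u,v)\in\mathbb{C}[y,z]^N$ be the column vector whose $i$-th entry ($i=1,\dots,N$, counted from the top) is $p_{k+2(N-i)}(u,v)$. Then (a) $\det\big[C_{-N+2}(y,z),C_{-N+3}(y,z),\dots,C_0(y,z),C_1(y,z)\big]=\phi_N(y,z)$; (b) $\det\big[C_{-N+2}(y/q,z),C_{-N+3}(y,z),\dots,C_1(y,z)\big]=\phi_N(y/q,z)$; (c) $\det\big[C_{-N+2}(y,z/q),C_{-N+3}(y,z),\dots,C_1(y,z)\big]=\phi_N(y,z/q)$; (d) $\det\big[C_{-N+3}(y/q,z),C_{-N+3}(y,z),C_{-N+4}(y,z),\dots,C_1(y,z)\big]=(1-q)\frac{y}{q}\,\phi_N(y/q,z)$; (e) $\det\big[C_{-N+3}(y,z/q),C_{-N+3}(y,z),C_{-N+4}(y,z),\dots,C_1(y,z)\big]=(1-q)\frac{z}{q}\,\phi_N(y,z/q)$; (f) $\det\big[C_{-N+3}(y,z/q),C_{-N+3}(y/q,z),C_{-N+4}(y,z),\dots,C_1(y,z)\big]=\frac{1-q}{q}(z-y)\,\phi_N(y/q,z/q)$. In (b),(c) the $j$-th column for $2\le j\le N$ is $C_{-N+j+1}(y,z)$; in (d),(e) likewise for $2\le j\le N$; in (f) the $j$-th column for $3\le j\le N$ is $C_{-N+j+1}(y,z)$.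
   Context: $q$ is a fixed nonzero complex constant that is not a root of unity; $y,z$ are variables. For $k\in\mathbb{Z}$ the polynomials $p_k(y,z)$ are defined by the generating function $\sum_{n\ge 0}p_n(y,z)t^n=\frac{(-(1-q)t;q)_\infty}{((1-q)yt;q)_\infty((1-q)zt;q)_\infty}$, with $(a;q)_\infty=\prod_{i\ge0}(1-aq^i)$, and $p_k=0$ for $k<0$; equivalently $p_n(y,z)=(1-q)^n\sum_{a+b+c=n}\frac{y^a z^b q^{c(c-1)/2}}{(q;q)_a(q;q)_b(q;q)_c}$ with $(q;q)_m=\prod_{j=1}^m(1-q^j)$. For $N>0$, $\phi_N(y,z)=\det\big(p_{N-2i+j+1}(y,z)\big)_{i,j=1}^N$. *)

theory Defs
  imports Complex_Main "Jordan_Normal_Form.Determinant"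
begin

definition qpoch :: "complex \<Rightarrow> nat \<Rightarrow> complex" where
  "qpoch q m = (\<Prod>j=1..m. 1 - q ^ j)"

definition pp :: "complex \<Rightarrow> int \<Rightarrow> complex \<Rightarrow> complex \<Rightarrow> complex" where
  "pp q k y z = (if k < 0 then 0 else
     (let n = nat k in (1 - q) ^ n *
       (\<Sum>(a, b, c) \<in> {(a, b, c). a + b + c = n}.
          y ^ a * z ^ b * q ^ (c * (c - 1) div 2) / (qpoch q a * qpoch q b * qpoch q c))))"

text \<open>phi_N(y,z) = det (p_{N-2i+j+1}(y,z))_{i,j=1..N}; here with 0-based indices i,j < N,
  so the entry is p_{N - 2(i+1) + (j+1) + 1}.\<close>
definition phi :: "complex \<Rightarrow> nat \<Rightarrow> complex \<Rightarrow> complex \<Rightarrow> complex" where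
  "phi q N y z = det (mat N N (\<lambda>(i, j).
      pp q (int N - 2 * (int i + 1) + (int j + 1) + 1) y z))"

text \<open>Column vector C_k(u,v): its (1-based) i-th entry is p_{k+2(N-i)}(u,v);
  here 0-based row index i < N, i.e. entry p_{k + 2(N - (i+1))}(u,v).\<close>
definition Ccol :: "complex \<Rightarrow> nat \<Rightarrow> int \<Rightarrow> complex \<Rightarrow> complex \<Rightarrow> nat \<Rightarrow> complex" where
  "Ccol q N k u v i = pp q (k + 2 * (int N - (int i + 1))) u v"

definition detcols :: "nat \<Rightarrow> (nat \<Rightarrow> nat \<Rightarrow> complex) \<Rightarrow> complex" where
  "detcols N cf = det (mat N N (\<lambda>(i, j). cf j i))"

text \<open>The standard column in (1-based) position j is C_{-N+j+1}(y,z);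
  with 0-based position j this is C_{-N+j+2}(y,z).\<close>
definition stdcol :: "complex \<Rightarrow> nat \<Rightarrow> complex \<Rightarrow> complex \<Rightarrow> nat \<Rightarrow> nat \<Rightarrow> complex" where
  "stdcol q N y z j = Ccol q N (- int N + int j + 2) y z"

end

theory Submission
  imports Defs
begin

text \<open>Replacing \<open>y\<close> by \<open>q y\<close> multiplies the generating function by \<open>1 - (1 - q) y t\<close>, so
  \<open>p\<^sub>k(q y, z) = p\<^sub>k(y, z) - (1 - q) y p\<^sub>k\<^sub>-\<^sub>1(y, z)\<close>, and symmetrically in \<open>z\<close>.
  Hence every standard column at the dilated arguments is the undilated column plus multiples of
  the one or two columns to its left. The determinants of the theorem are thereby related to
  \<open>\<phi>\<^sub>N\<close> by unitriangular column operations, preceded in (d)-(f) by elementary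
  operations on the first two columns (a subtraction, a scaling and a swap), which produce the
  prefactors.\<close>

lemma detcols_conv_det_rows: "detcols N cf = det (mat N N (\<lambda>(j, i). cf j i))"
proof -
  have "mat N N (\<lambda>(i, j). cf j i) = transpose_mat (mat N N (\<lambda>(j, i). cf j i))"
    by (rule eq_matI) auto
  then show ?thesis
    unfolding detcols_def by (metis det_transpose mat_carrier)
qed

lemma detcols_add_multiple_col:
  assumes "j < N" "l < N" "j \<noteq> l" "cf j = (\<lambda>i. v i + a * cf l i)"
  shows "detcols N cf = detcols N (cf(j := v))"
proof -
  have "mat N N (\<lambda>(k, i). cf k i) = addrow a j l (mat N N (\<lambda>(k, i). (cf(j := v)) k i))"
    by (rule eq_matI) (use assms in auto)
  then show ?thesis
    using assms by (simp add: detcols_conv_det_rows det_addrow)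
qed

lemma detcols_scale_col:
  assumes "j < N"
  shows "detcols N (cf(j := (\<lambda>i. a * v i))) = a * detcols N (cf(j := v))"
proof -
  have "mat N N (\<lambda>(k, i). (cf(j := (\<lambda>i. a * v i))) k i)
      = multrow j a (mat N N (\<lambda>(k, i). (cf(j := v)) k i))"
    by (rule eq_matI) (use assms in auto)
  then show ?thesis
    using assms by (simp add: detcols_conv_det_rows det_multrow)
qed

lemma detcols_swap_cols:
  assumes "j < N" "l < N" "j \<noteq> l"
  shows "detcols N (cf(j := cf l, l := cf j)) = - detcols N cf"
proof -
  have "mat N N (\<lambda>(k, i). (cf(j := cf l, l := cf j)) k i) = swaprows j l (mat N N (\<lambda>(k, i). cf k i))"
    by (rule eq_matI) (use assms in auto)
  then show ?thesis
    using assms by (simp add: detcols_conv_det_rows det_swaprows)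
qed

lemma detcols_unitriangular_combination:
  assumes "\<And>j i. j < N \<Longrightarrow> i < N \<Longrightarrow> cf j i = P j i + (\<Sum>l<j. c l j * P l i)"
  shows "detcols N cf = detcols N P"
proof -
  define U :: "complex mat"
    where "U = mat N N (\<lambda>(l, j). if l = j then 1 else if l < j then c l j else 0)"
  have U: "U \<in> carrier_mat N N"
    by (simp add: U_def)
  have "upper_triangular U"
    by (auto simp: upper_triangular_def U_def)
  then have "det U = prod_list (diag_mat U)"
    using U by (rule det_upper_triangular)
  also have "\<dots> = 1"
    by (simp add: prod_list_diag_prod U_def)
  finally have det_U: "det U = 1" .
  have entry: "(\<Sum>l<N. P l i * U $$ (l, j)) = cf j i" if "i < N" "j < N" for i j
  proof -
    have "(\<Sum>l<N. P l i * U $$ (l, j)) = (\<Sum>l<Suc j. P l i * U $$ (l, j))"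
      by (rule sum.mono_neutral_right) (use that in \<open>auto simp: U_def\<close>)
    also have "\<dots> = P j i + (\<Sum>l<j. c l j * P l i)"
      using that by (simp add: U_def mult.commute)
    also have "\<dots> = cf j i"
      using assms that by simp
    finally show ?thesis .
  qed
  have "mat N N (\<lambda>(i, j). cf j i) = mat N N (\<lambda>(i, j). P j i) * U"
    by (rule eq_matI) (use U in \<open>auto simp: scalar_prod_def atLeast0LessThan entry\<close>)
  then show ?thesis
    unfolding detcols_def using U det_U by (simp add: det_mult[OF mat_carrier U])
qed

lemma detcols_banded_combination:
  assumes "1 \<le> m" and "\<beta> \<noteq> 0 \<longrightarrow> 2 \<le> m"
    and "\<And>j. j < m \<Longrightarrow> cf j = P j"
    and "\<And>j. m \<le> j \<Longrightarrow> j < N \<Longrightarrow> cf j = (\<lambda>i. P j i + \<alpha> * P (j - 1) i + \<beta> * P (j - 2) i)"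
  shows "detcols N cf = detcols N P"
proof (rule detcols_unitriangular_combination
    [where c = "\<lambda>l j. if j < m then 0
      else (if l = j - 1 then \<alpha> else 0) + (if l = j - 2 then \<beta> else 0)"])
  fix j i assume "j < N"
  show "cf j i = P j i + (\<Sum>l<j. (if j < m then 0 else (if l = j - 1 then \<alpha> else 0)
      + (if l = j - 2 then \<beta> else 0)) * P l i)"
  proof (cases "j < m")
    case True
    then show ?thesis using assms(3) by simp
  next
    case False
    have "(\<Sum>l<j. (if l = j - 1 then \<alpha> else 0) * P l i) = \<alpha> * P (j - 1) i"
      using False assms(1) by (simp add: if_distrib[where f = "\<lambda>x. x * _"] cong: if_cong)
    moreover have "(\<Sum>l<j. (if l = j - 2 then \<beta> else 0) * P l i) = \<beta> * P (j - 2) i"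
      using False assms(2)
      by (cases "\<beta> = 0") (simp_all add: if_distrib[where f = "\<lambda>x. x * _"] cong: if_cong)
    ultimately show ?thesis
      using False assms(4) \<open>j < N\<close> by (simp add: distrib_right sum.distrib)
  qed
qed

lemma detcols_shifted_leading_col:
  assumes "2 \<le> N" and "cf 0 = P 1"
    and "\<And>j. 1 \<le> j \<Longrightarrow> j < N \<Longrightarrow> cf j = (\<lambda>i. P j i + a * P (j - 1) i)"
  shows "detcols N cf = - a * detcols N P"
proof -
  have "cf 1 = (\<lambda>i. a * P 0 i + 1 * cf 0 i)"
    using assms by (auto simp: algebra_simps)
  then have "detcols N cf = detcols N (cf(1 := (\<lambda>i. a * P 0 i)))"
    by (rule detcols_add_multiple_col[rotated 3]) (use assms in auto)
  also have "\<dots> = a * detcols N (cf(1 := P 0))"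
    using assms by (simp add: detcols_scale_col)
  also have "detcols N (cf(1 := P 0)) = - detcols N (cf(0 := P 0, 1 := P 1))"
    using detcols_swap_cols[of 0 N 1 "cf(1 := P 0)"] assms(1,2) by simp
  also have "detcols N (cf(0 := P 0, 1 := P 1)) = detcols N P"
    by (rule detcols_banded_combination[where m = 2 and \<beta> = 0 and \<alpha> = a])
      (use assms(3) in \<open>auto simp: less_2_cases_iff\<close>)
  finally show ?thesis by simp
qed

lemma detcols_two_shifted_leading_cols:
  assumes "2 \<le> N"
    and "cf 0 = (\<lambda>i. P 1 i + a * P 0 i)" and "cf 1 = (\<lambda>i. P 1 i + b * P 0 i)"
    and "\<And>j. 2 \<le> j \<Longrightarrow> j < N \<Longrightarrow>
      cf j = (\<lambda>i. P j i + (a + b) * P (j - 1) i + (a * b) * P (j - 2) i)"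
  shows "detcols N cf = (a - b) * detcols N P"
proof -
  have "cf 1 = (\<lambda>i. (b - a) * P 0 i + 1 * cf 0 i)"
    using assms(2,3) by (auto simp: algebra_simps)
  then have "detcols N cf = detcols N (cf(1 := (\<lambda>i. (b - a) * P 0 i)))"
    by (rule detcols_add_multiple_col[rotated 3]) (use assms in auto)
  also have "\<dots> = (b - a) * detcols N (cf(1 := P 0))"
    using assms by (simp add: detcols_scale_col)
  also have "detcols N (cf(1 := P 0)) = detcols N (cf(1 := P 0, 0 := P 1))"
    by (rule detcols_add_multiple_col[where l = 1 and a = a]) (use assms(1,2) in auto)
  also have "\<dots> = - detcols N (cf(0 := P 0, 1 := P 1))"
    using detcols_swap_cols[of 0 N 1 "cf(1 := P 0, 0 := P 1)"] assms(1) by simp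
  also have "detcols N (cf(0 := P 0, 1 := P 1)) = detcols N P"
    by (rule detcols_banded_combination[where m = 2 and \<beta> = "a * b" and \<alpha> = "a + b"])
      (use assms(4) in \<open>auto simp: less_2_cases_iff\<close>)
  finally show ?thesis by (simp add: algebra_simps)
qed

lemma qpoch_Suc: "qpoch q (Suc n) = qpoch q n * (1 - q ^ Suc n)"
  unfolding qpoch_def by (simp add: prod.nat_ivl_Suc')

lemma qpoch_nonzero:
  assumes "\<forall>n::nat. n > 0 \<longrightarrow> q ^ n \<noteq> 1"
  shows "qpoch q m \<noteq> 0"
  using assms by (auto simp: qpoch_def)

lemma sum_compositions3:
  "(\<Sum>(a, b, c) \<in> {(a, b, c). a + b + c = (n::nat)}. f a b c)
    = (\<Sum>a\<le>n. \<Sum>b\<le>n - a. f a b (n - a - b))"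
proof -
  have "(\<Sum>(a, b, c) \<in> {(a, b, c). a + b + c = n}. f a b c)
      = (\<Sum>(a, b) \<in> (SIGMA a:{..n}. {..n - a}). f a b (n - a - b))"
    by (rule sum.reindex_bij_witness
        [where j = "\<lambda>(a, b, c). (a, b)" and i = "\<lambda>(a, b). (a, b, n - a - b)"]) auto
  also have "\<dots> = (\<Sum>a\<le>n. \<Sum>b\<le>n - a. f a b (n - a - b))"
    by (rule sum.Sigma[symmetric]) auto
  finally show ?thesis .
qed

text \<open>Coefficientwise form of \<open>1 / (q y t; q)\<^sub>\<infinity> = (1 - y t) / (y t; q)\<^sub>\<infinity>\<close>,
  convolved with an arbitrary sequence \<open>g\<close>.\<close>
lemma q_dilation_convolution:
  assumes "\<forall>n::nat. n > 0 \<longrightarrow> q ^ n \<noteq> 1"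
  shows "(\<Sum>a\<le>Suc n. (q * y) ^ a / qpoch q a * g (Suc n - a))
    = (\<Sum>a\<le>Suc n. y ^ a / qpoch q a * g (Suc n - a))
      - y * (\<Sum>a\<le>n. y ^ a / qpoch q a * g (n - a))"
proof -
  have weight: "(q * y) ^ Suc a / qpoch q (Suc a)
      = y ^ Suc a / qpoch q (Suc a) - y * (y ^ a / qpoch q a)" for a
  proof -
    have "1 - q ^ Suc a \<noteq> 0" "qpoch q a \<noteq> 0"
      using assms qpoch_nonzero[OF assms] by auto
    then show ?thesis
      by (simp add: qpoch_Suc field_simps)
  qed
  have "(\<Sum>a\<le>Suc n. (q * y) ^ a / qpoch q a * g (Suc n - a))
      = g (Suc n) + (\<Sum>a\<le>n. (q * y) ^ Suc a / qpoch q (Suc a) * g (n - a))"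
    by (subst sum.atMost_Suc_shift) (simp add: qpoch_def)
  also have "\<dots> = g (Suc n)
      + (\<Sum>a\<le>n. (y ^ Suc a / qpoch q (Suc a) - y * (y ^ a / qpoch q a)) * g (n - a))"
    by (simp only: weight)
  also have "\<dots> = g (Suc n) + (\<Sum>a\<le>n. y ^ Suc a / qpoch q (Suc a) * g (n - a))
      - y * (\<Sum>a\<le>n. y ^ a / qpoch q a * g (n - a))"
    by (simp add: left_diff_distrib sum_subtractf sum_distrib_left mult.assoc)
  also have "g (Suc n) + (\<Sum>a\<le>n. y ^ Suc a / qpoch q (Suc a) * g (n - a))
      = (\<Sum>a\<le>Suc n. y ^ a / qpoch q a * g (Suc n - a))"
    by (subst sum.atMost_Suc_shift) (simp add: qpoch_def)
  finally show ?thesis .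
qed

lemma pp_dilate_fst:
  assumes "\<forall>n::nat. n > 0 \<longrightarrow> q ^ n \<noteq> 1"
  shows "pp q k (q * y) z = pp q k y z + (q - 1) * y * pp q (k - 1) y z"
proof -
  define g where
    "g m = (\<Sum>b\<le>m. z ^ b * q ^ ((m - b) * (m - b - 1) div 2) / (qpoch q b * qpoch q (m - b)))" for m
  have conv: "pp q (int n) u z = (1 - q) ^ n * (\<Sum>a\<le>n. u ^ a / qpoch q a * g (n - a))" for n u
    unfolding pp_def Let_def sum_compositions3 g_def
    by (simp add: sum_distrib_left diff_diff_add mult.assoc)
  consider "k < 0" | "k = 0" | n where "k = int (Suc n)"
    by (cases k rule: int_cases3) (auto simp: gr0_conv_Suc)
  then show ?thesis
  proof cases
    case 1
    then show ?thesis by (simp add: pp_def)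
  next
    case 2
    then show ?thesis using conv[of 0] by (simp add: pp_def)
  next
    case 3
    define A where "A u = (\<Sum>a\<le>Suc n. u ^ a / qpoch q a * g (Suc n - a))" for u
    define B where "B = (\<Sum>a\<le>n. y ^ a / qpoch q a * g (n - a))"
    have "pp q k (q * y) z = (1 - q) ^ Suc n * (A y - y * B)"
      unfolding 3 conv A_def B_def q_dilation_convolution[OF assms] ..
    also have "\<dots> = (1 - q) ^ Suc n * A y + (q - 1) * y * ((1 - q) ^ n * B)"
      by (simp add: algebra_simps)
    also have "\<dots> = pp q k y z + (q - 1) * y * pp q (k - 1) y z"
      unfolding 3 conv A_def B_def by (simp add: conv)
    finally show ?thesis .
  qed
qed

lemma pp_swap: "pp q k z y = pp q k y z"
proof -
  have "(\<Sum>(a, b, c) \<in> {(a, b, c). a + b + c = n}.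
          z ^ a * y ^ b * q ^ (c * (c - 1) div 2) / (qpoch q a * qpoch q b * qpoch q c))
      = (\<Sum>(a, b, c) \<in> {(a, b, c). a + b + c = n}.
          y ^ a * z ^ b * q ^ (c * (c - 1) div 2) / (qpoch q a * qpoch q b * qpoch q c))" for n
    by (rule sum.reindex_bij_witness
        [where i = "\<lambda>(a, b, c). (b, a, c)" and j = "\<lambda>(a, b, c). (b, a, c)"]) (auto simp: mult_ac)
  then show ?thesis
    unfolding pp_def Let_def by simp
qed

lemma pp_dilate_snd:
  assumes "\<forall>n::nat. n > 0 \<longrightarrow> q ^ n \<noteq> 1"
  shows "pp q k y (q * z) = pp q k y z + (q - 1) * z * pp q (k - 1) y z"
  using pp_dilate_fst[OF assms, of k z y] by (simp only: pp_swap)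

lemma stdcol_eq: "stdcol q N y z j i = pp q (int N + int j - 2 * int i) y z"
  unfolding stdcol_def Ccol_def by (simp add: algebra_simps)

lemma phi_conv_detcols: "phi q N y z = detcols N (stdcol q N y z)"
  unfolding phi_def detcols_def
  by (rule arg_cong[where f = det], rule eq_matI) (auto simp: stdcol_eq algebra_simps)

lemma stdcol_dilate_fst:
  assumes "\<forall>n::nat. n > 0 \<longrightarrow> q ^ n \<noteq> 1" and "1 \<le> j"
  shows "stdcol q N (q * y) z j = (\<lambda>i. stdcol q N y z j i + (q - 1) * y * stdcol q N y z (j - 1) i)"
proof
  fix i
  have "int N + int (j - 1) - 2 * int i = int N + int j - 2 * int i - 1"
    using assms(2) by simp
  then show "stdcol q N (q * y) z j i = stdcol q N y z j i + (q - 1) * y * stdcol q N y z (j - 1) i"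
    unfolding stdcol_eq by (simp only: pp_dilate_fst[OF assms(1)])
qed

lemma stdcol_dilate_snd:
  assumes "\<forall>n::nat. n > 0 \<longrightarrow> q ^ n \<noteq> 1" and "1 \<le> j"
  shows "stdcol q N y (q * z) j = (\<lambda>i. stdcol q N y z j i + (q - 1) * z * stdcol q N y z (j - 1) i)"
proof
  fix i
  have "int N + int (j - 1) - 2 * int i = int N + int j - 2 * int i - 1"
    using assms(2) by simp
  then show "stdcol q N y (q * z) j i = stdcol q N y z j i + (q - 1) * z * stdcol q N y z (j - 1) i"
    unfolding stdcol_eq by (simp only: pp_dilate_snd[OF assms(1)])
qed

lemma stdcol_swap: "stdcol q N z y = stdcol q N y z"
  by (rule ext)+ (simp add: stdcol_eq pp_swap)

lemma detcols_dilated_stdcol_first_col: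
  assumes "\<forall>n::nat. n > 0 \<longrightarrow> q ^ n \<noteq> 1"
  shows "detcols N ((stdcol q N (q * y) z)(0 := stdcol q N y z 0)) = detcols N (stdcol q N y z)"
  by (rule detcols_banded_combination[where m = 1 and \<beta> = 0 and \<alpha> = "(q - 1) * y"])
    (auto simp: stdcol_dilate_fst[OF assms])

lemma detcols_dilated_stdcol_shifted_first_col:
  assumes "\<forall>n::nat. n > 0 \<longrightarrow> q ^ n \<noteq> 1" and "2 \<le> N"
  shows "detcols N ((stdcol q N (q * y) z)(0 := stdcol q N y z 1))
    = (1 - q) * y * detcols N (stdcol q N y z)"
proof -
  have "detcols N ((stdcol q N (q * y) z)(0 := stdcol q N y z 1))
      = - ((q - 1) * y) * detcols N (stdcol q N y z)"
    by (rule detcols_shifted_leading_col) (use assms stdcol_dilate_fst[OF assms(1)] in auto)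
  then show ?thesis
    by (simp add: algebra_simps)
qed

lemma detcols_doubly_dilated_stdcol_shifted_first_cols:
  assumes "\<forall>n::nat. n > 0 \<longrightarrow> q ^ n \<noteq> 1" and "2 \<le> N"
  shows "detcols N ((stdcol q N (q * y) (q * z))
      (0 := stdcol q N (q * y) z 1, 1 := stdcol q N y (q * z) 1))
    = (1 - q) * (z - y) * detcols N (stdcol q N y z)"
proof -
  note dilate_fst = stdcol_dilate_fst[OF assms(1)] and dilate_snd = stdcol_dilate_snd[OF assms(1)]
  have "stdcol q N (q * y) (q * z) j = (\<lambda>i. stdcol q N y z j i
      + ((q - 1) * y + (q - 1) * z) * stdcol q N y z (j - 1) i
      + ((q - 1) * y * ((q - 1) * z)) * stdcol q N y z (j - 2) i)" if "2 \<le> j" for j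
    using that dilate_fst[of j N y "q * z"] dilate_snd[of j N y z] dilate_snd[of "j - 1" N y z]
    by (auto simp: algebra_simps numeral_2_eq_2)
  then have "detcols N ((stdcol q N (q * y) (q * z))
      (0 := stdcol q N (q * y) z 1, 1 := stdcol q N y (q * z) 1))
      = ((q - 1) * y - (q - 1) * z) * detcols N (stdcol q N y z)"
    by (intro detcols_two_shifted_leading_cols) (use assms dilate_fst[of 1] dilate_snd[of 1] in auto)
  then show ?thesis
    by (simp add: algebra_simps)
qed

theorem lemma1:
  fixes q y z :: complex and N :: nat
  assumes q_nz: "q \<noteq> 0"
    and q_not_root: "\<forall>n::nat. n > 0 \<longrightarrow> q ^ n \<noteq> 1"
    and N_ge: "N \<ge> 2"
  shows "(detcols N (stdcol q N y z) = phi q N y z)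
    \<and> (detcols N ((stdcol q N y z)(0 := Ccol q N (- int N + 2) (y / q) z)) = phi q N (y / q) z)
    \<and> (detcols N ((stdcol q N y z)(0 := Ccol q N (- int N + 2) y (z / q))) = phi q N y (z / q))
    \<and> (detcols N ((stdcol q N y z)(0 := Ccol q N (- int N + 3) (y / q) z))
             = (1 - q) * (y / q) * phi q N (y / q) z)
    \<and> (detcols N ((stdcol q N y z)(0 := Ccol q N (- int N + 3) y (z / q)))
             = (1 - q) * (z / q) * phi q N y (z / q))
    \<and> (detcols N ((stdcol q N y z)(0 := Ccol q N (- int N + 3) y (z / q),
                                       1 := Ccol q N (- int N + 3) (y / q) z))
             = (1 - q) / q * (z - y) * phi q N (y / q) (z / q))"
proof -
  have "Ccol q N (- int N + 2) u v = stdcol q N u v 0"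
    and "Ccol q N (- int N + 3) u v = stdcol q N u v 1" for u v
    by (simp_all add: stdcol_def)
  moreover have "(1 - q) * (z / q - y / q) = (1 - q) / q * (z - y)"
    using q_nz by (simp add: field_simps)
  ultimately show ?thesis
    unfolding phi_conv_detcols
    using detcols_dilated_stdcol_first_col[OF q_not_root, of N "y / q" z]
      detcols_dilated_stdcol_first_col[OF q_not_root, of N "z / q" y]
      detcols_dilated_stdcol_shifted_first_col[OF q_not_root N_ge, of "y / q" z]
      detcols_dilated_stdcol_shifted_first_col[OF q_not_root N_ge, of "z / q" y]
      detcols_doubly_dilated_stdcol_shifted_first_cols[OF q_not_root N_ge, of "y / q" "z / q"]
    by (simp add: q_nz stdcol_swap[of q N _ y])
qed

end
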